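(* Let $p_1\ge p_2\ge\cdots\ge p_n$ be positive integers (not necessarily distinct). Let $q_1>q_2>\cdots>q_m$ be the distinct values among $p_1,\dots,p_n$. Then the number of distinct sequences in $\{S_c((p_1,\dots,p_n)) : c\in[0,1]\}$ equals the number of distinct sequences in $\{S_c((q_1,\dots,q_m)) : c\in[0,1]\}$.
   Context: Stationary divisor method with cut point $c\in[0,1]$ for a vote vector $\mathbf v=(v_1,\dots,v_r)$ with $v_1\ge\cdots\ge v_r$: seats are allocated one at a time. Initially each party $i$ has $a_i=0$ seats; each next seat goes to a party $i$ maximizing $v_i/(a_i+c)$, whose $a_i$ then increases by $1$. Ties are broken in favor of the smallest index. For $c=0$ the convention is that $v_i/0>v_j/0$ whenever $v_i>v_j$, ties among equal $v_i/0$ are broken by smallest index, and $v_i/0>v_j/k$ for every $k>0$. $S_c(\mathbf v)$ is the infinite sequence of indices of the parties receiving successive seats. *)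

theory Defs
  imports Complex_Main "HOL-Library.Equipollence"
begin

text \<open>Priority comparison for the stationary divisor method with cut point c.
  prio_ge c v a w b holds iff the quotient v/(a+c) is at least w/(b+c),
  with the convention for c = 0 that v/0 beats w/k for every k > 0 and
  v/0 versus w/0 is compared by v versus w.\<close>
definition prio_ge :: "real \<Rightarrow> real \<Rightarrow> nat \<Rightarrow> real \<Rightarrow> nat \<Rightarrow> bool" where
  "prio_ge c v a w b =
     (if real a + c = 0 then (real b + c \<noteq> 0 \<or> w \<le> v)
      else (real b + c \<noteq> 0 \<and> w / (real b + c) \<le> v / (real a + c)))"

definition winner :: "real \<Rightarrow> real list \<Rightarrow> (nat \<Rightarrow> nat) \<Rightarrow> nat" where
  "winner c vs a =
     (LEAST i. i < length vs \<and> (\<forall>j < length vs. prio_ge c (vs ! i) (a i) (vs ! j) (a j)))"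

fun seats :: "real \<Rightarrow> real list \<Rightarrow> nat \<Rightarrow> (nat \<Rightarrow> nat)" where
  "seats c vs 0 = (\<lambda>_. 0)"
| "seats c vs (Suc k) =
     (let a = seats c vs k; i = winner c vs a in a(i := Suc (a i)))"

text \<open>The seat sequence S_c(v): the k-th entry (from 0) is the (0-based) index of the
  party receiving seat number k+1.\<close>
definition S_seq :: "real \<Rightarrow> real list \<Rightarrow> nat \<Rightarrow> nat" where
  "S_seq c vs k = winner c vs (seats c vs k)"

end

(*
  Seat k+1 goes to party i rather than to a later party j exactly when i's quotient is at least
  j's, so the sequence S_c records, for every i < j and all seat counts a, b, whether
  v_i/(a+c) >= v_j/(b+c): this holds iff at some time i has more than a seats while j has at
  most b (every party keeps receiving seats). Hence S_c = S_c' iff c and c' induce the same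
  comparisons between earlier and later parties. Between parties with equal votes the
  comparison depends only on the seat counts, so the condition only involves pairs of distinct
  vote values and is the same for (p_1,...,p_n) and (q_1,...,q_m). Both sets of sequences are
  therefore quotients of [0,1] by one and the same equivalence relation.
*)
theory Submission
  imports Defs "HOL-Library.Product_Lexorder"
begin

definition prio_key :: "real \<Rightarrow> real \<Rightarrow> nat \<Rightarrow> real \<times> real" where
  "prio_key c v a = (if real a + c = 0 then (1, v) else (0, v / (real a + c)))"

lemma prio_ge_iff_prio_key: "prio_ge c v a w b \<longleftrightarrow> prio_key c w b \<le> prio_key c v a"
  unfolding prio_ge_def prio_key_def by (auto simp: less_eq_prod_def)

lemma prio_key_antimono:
  assumes "a \<le> b" "0 \<le> v" "0 \<le> c"
  shows "prio_key c v b \<le> prio_key c v a"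
proof (cases "real a + c = 0")
  case False
  with assms have "v / (real b + c) \<le> v / (real a + c)"
    by (intro divide_left_mono) auto
  with False assms show ?thesis
    unfolding prio_key_def by (auto simp: less_eq_prod_def)
qed (auto simp: prio_key_def less_eq_prod_def)

lemma prio_ge_equal_votes:
  assumes "0 < v" "0 \<le> c"
  shows "prio_ge c v a v b \<longleftrightarrow> a \<le> b"
proof (cases "real a + c = 0 \<or> real b + c = 0")
  case False
  with assms have "0 < real a + c" "0 < real b + c" by linarith+
  with assms False show ?thesis
    unfolding prio_ge_def by (simp add: frac_le_eq field_simps)
qed (use assms in \<open>auto simp: prio_ge_def\<close>)

lemma winner_spec:
  assumes "vs \<noteq> []"
  shows "winner c vs a < length vs"
    and "j < length vs \<Longrightarrow> prio_ge c (vs ! winner c vs a) (a (winner c vs a)) (vs ! j) (a j)"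
proof -
  let ?P = "\<lambda>i. i < length vs \<and> (\<forall>j < length vs. prio_ge c (vs ! i) (a i) (vs ! j) (a j))"
  let ?K = "(\<lambda>j. prio_key c (vs ! j) (a j)) ` {..<length vs}"
  have "Max ?K \<in> ?K" using assms by (intro Max_in) auto
  then obtain i where "i < length vs" "prio_key c (vs ! i) (a i) = Max ?K" by auto
  then have "?P i" by (auto simp: prio_ge_iff_prio_key)
  then have "?P (winner c vs a)" unfolding winner_def by (rule LeastI)
  then show "winner c vs a < length vs"
    and "j < length vs \<Longrightarrow> prio_ge c (vs ! winner c vs a) (a (winner c vs a)) (vs ! j) (a j)"
    by auto
qed

lemma winner_least:
  assumes "vs \<noteq> []" "j < winner c vs a"
  shows "\<not> prio_ge c (vs ! j) (a j) (vs ! winner c vs a) (a (winner c vs a))"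
proof
  let ?w = "winner c vs a"
  assume "prio_ge c (vs ! j) (a j) (vs ! ?w) (a ?w)"
  then have "prio_ge c (vs ! j) (a j) (vs ! k) (a k)" if "k < length vs" for k
    using winner_spec(2)[OF assms(1) that, where c = c and a = a]
    by (auto simp: prio_ge_iff_prio_key intro: order_trans)
  moreover have "j < length vs" using less_trans[OF assms(2) winner_spec(1)[OF assms(1)]] .
  ultimately have "j < length vs \<and> (\<forall>k < length vs. prio_ge c (vs ! j) (a j) (vs ! k) (a k))"
    by blast
  with assms(2) show False unfolding winner_def by (blast dest: not_less_Least)
qed

lemma winner_cong:
  assumes "\<And>i j a b. i < j \<Longrightarrow> j < length vs \<Longrightarrow>
      prio_ge c (vs ! i) a (vs ! j) b \<longleftrightarrow> prio_ge c' (vs ! i) a (vs ! j) b"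
  shows "winner c vs a = winner c' vs a"
proof (cases "vs = []")
  case True
  then show ?thesis unfolding winner_def by simp
next
  case False
  let ?w = "winner c vs a" and ?w' = "winner c' vs a"
  have beats: "prio_ge c (vs ! ?w) (a ?w) (vs ! ?w') (a ?w')"
    "prio_ge c' (vs ! ?w') (a ?w') (vs ! ?w) (a ?w)"
    using winner_spec[OF False] by blast+
  show ?thesis
  proof (rule linorder_cases)
    assume "?w < ?w'"
    with beats(1) assms winner_spec(1)[OF False] have "prio_ge c' (vs ! ?w) (a ?w) (vs ! ?w') (a ?w')"
      by blast
    with \<open>?w < ?w'\<close> show ?thesis using winner_least[OF False] by blast
  next
    assume "?w' < ?w"
    with beats(2) assms winner_spec(1)[OF False] have "prio_ge c (vs ! ?w') (a ?w') (vs ! ?w) (a ?w)"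
      by blast
    with \<open>?w' < ?w\<close> show ?thesis using winner_least[OF False] by blast
  qed
qed

lemma S_seq_cong:
  assumes "\<And>i j a b. i < j \<Longrightarrow> j < length vs \<Longrightarrow>
      prio_ge c (vs ! i) a (vs ! j) b \<longleftrightarrow> prio_ge c' (vs ! i) a (vs ! j) b"
  shows "S_seq c vs = S_seq c' vs"
proof -
  have "seats c vs k = seats c' vs k" for k
    by (induction k) (simp_all add: Let_def winner_cong[OF assms])
  then show ?thesis unfolding S_seq_def using winner_cong[OF assms] by auto
qed

lemma seats_eq_if_S_seq_eq:
  assumes "S_seq c vs = S_seq c' vs"
  shows "seats c vs k = seats c' vs k"
proof (induction k)
  case (Suc k)
  with fun_cong[OF assms, of k] show ?case by (simp add: S_seq_def Let_def)
qed simp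

lemma seats_mono: "k \<le> k' \<Longrightarrow> seats c vs k i \<le> seats c vs k' i"
  by (induction k' rule: dec_induct) (auto simp: Let_def intro: le_trans)

lemma seats_sum:
  assumes "vs \<noteq> []"
  shows "(\<Sum>i<length vs. seats c vs k i) = k"
proof (induction k)
  case (Suc k)
  let ?a = "seats c vs k" and ?w = "winner c vs (seats c vs k)"
  have w: "?w \<in> {..<length vs}" using winner_spec[OF assms] by auto
  have "(\<Sum>i<length vs. seats c vs (Suc k) i) = (\<Sum>i<length vs. (?a(?w := Suc (?a ?w))) i)"
    by (simp add: Let_def)
  also have "\<dots> = Suc (\<Sum>i<length vs. ?a i)"
    using w by (simp add: sum.remove[OF _ w])
  finally show ?case using Suc.IH by simp
qed simp

lemma seat_awarded_at_count:
  assumes "a < seats c vs k i"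
  shows "\<exists>k' < k. seats c vs k' i = a \<and> S_seq c vs k' = i"
  using assms
proof (induction k)
  case (Suc k)
  show ?case
  proof (cases "a < seats c vs k i")
    case True
    with Suc.IH show ?thesis by (meson less_SucI)
  next
    case False
    with Suc.prems have "S_seq c vs k = i \<and> seats c vs k i = a"
      by (auto simp: S_seq_def Let_def split: if_splits)
    then show ?thesis by auto
  qed
qed simp

lemma some_seat_awarded_at_count:
  assumes "vs \<noteq> []"
  shows "\<exists>k m. seats c vs k m = M \<and> S_seq c vs k = m"
proof -
  define k where "k = length vs * Suc M"
  have "\<exists>m < length vs. M < seats c vs k m"
  proof (rule ccontr)
    assume "\<not> ?thesis"
    then have "(\<Sum>m<length vs. seats c vs k m) \<le> (\<Sum>m<length vs. M)"
      by (intro sum_mono) (meson lessThan_iff not_less)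
    with assms show False by (simp add: seats_sum k_def)
  qed
  then show ?thesis using seat_awarded_at_count by blast
qed

text \<open>If party i were starved, some party would eventually be awarded a seat at a count M
  so large that its quotient falls below that of i.\<close>
lemma seats_unbounded:
  assumes pos: "\<forall>v \<in> set vs. 0 < v" and "0 \<le> c" and i: "i < length vs"
  shows "\<exists>k. a < seats c vs k i"
proof (rule ccontr)
  assume "\<not> ?thesis"
  then have starved: "seats c vs k i \<le> a" for k by (simp add: not_less)
  have vi: "0 < vs ! i" using pos i by simp
  define V where "V = Max (set vs)"
  define M :: nat where "M = nat \<lceil>V * (real a + c) / vs ! i\<rceil> + 1"
  have M: "V * (real a + c) / vs ! i < real M" "0 < M" unfolding M_def by linarith+
  have "vs \<noteq> []" using i by auto
  then obtain k m where km: "seats c vs k m = M" "S_seq c vs k = m"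
    using some_seat_awarded_at_count by blast
  have m: "m < length vs" using km(2) winner_spec(1)[OF \<open>vs \<noteq> []\<close>] by (auto simp: S_seq_def)
  have "prio_key c (vs ! i) a \<le> prio_key c (vs ! i) (seats c vs k i)"
    using starved vi \<open>0 \<le> c\<close> by (intro prio_key_antimono) auto
  also have "\<dots> \<le> prio_key c (vs ! m) M"
    using winner_spec(2)[OF \<open>vs \<noteq> []\<close> i, where c = c and a = "seats c vs k"] km
    by (simp add: S_seq_def prio_ge_iff_prio_key)
  finally have key: "prio_key c (vs ! i) a \<le> (0, vs ! m / (real M + c))"
    using M(2) \<open>0 \<le> c\<close> by (simp add: prio_key_def)
  then have "0 < real a + c"
    using \<open>0 \<le> c\<close> by (auto simp: prio_key_def less_eq_prod_def split: if_splits)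
  have "vs ! i / (real a + c) \<le> vs ! m / (real M + c)"
    using key \<open>0 < real a + c\<close> by (simp add: prio_key_def less_eq_prod_def)
  also have "\<dots> \<le> V / real M"
  proof -
    have "0 < vs ! m" "vs ! m \<le> V" using m pos by (auto simp: V_def)
    with M(2) \<open>0 \<le> c\<close> show ?thesis by (intro frac_le) auto
  qed
  finally have "real M \<le> V * (real a + c) / vs ! i"
    using vi M(2) \<open>0 < real a + c\<close> by (simp add: field_simps)
  with M(1) show False by simp
qed

lemma prio_ge_if_seats:
  assumes "0 \<le> c" "j < length vs" "0 \<le> vs ! j"
    and "a < seats c vs k i" "seats c vs k j \<le> b"
  shows "prio_ge c (vs ! i) a (vs ! j) b"
proof -
  obtain k' where k': "k' < k" "seats c vs k' i = a" "S_seq c vs k' = i"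
    using seat_awarded_at_count[OF assms(4)] by blast
  have "vs \<noteq> []" using assms(2) by auto
  have "prio_key c (vs ! j) b \<le> prio_key c (vs ! j) (seats c vs k' j)"
    using seats_mono[of k' k c vs j] k'(1) assms by (intro prio_key_antimono) auto
  also have "\<dots> \<le> prio_key c (vs ! i) a"
    using winner_spec(2)[OF \<open>vs \<noteq> []\<close> assms(2), where c = c and a = "seats c vs k'"] k'
    by (simp add: S_seq_def prio_ge_iff_prio_key)
  finally show ?thesis by (simp add: prio_ge_iff_prio_key)
qed

lemma not_prio_ge_if_seats:
  assumes "0 \<le> c" "i < j" "j < length vs" "0 \<le> vs ! i"
    and "b < seats c vs k j" "seats c vs k i \<le> a"
  shows "\<not> prio_ge c (vs ! i) a (vs ! j) b"
proof
  obtain k' where k': "k' < k" "seats c vs k' j = b" "S_seq c vs k' = j"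
    using seat_awarded_at_count[OF assms(5)] by blast
  have "vs \<noteq> []" using assms(3) by auto
  assume "prio_ge c (vs ! i) a (vs ! j) b"
  then have "prio_key c (vs ! j) b \<le> prio_key c (vs ! i) a" by (simp add: prio_ge_iff_prio_key)
  also have "\<dots> \<le> prio_key c (vs ! i) (seats c vs k' i)"
    using seats_mono[of k' k c vs i] k'(1) assms by (intro prio_key_antimono) auto
  finally have "prio_ge c (vs ! i) (seats c vs k' i) (vs ! j) b"
    by (simp add: prio_ge_iff_prio_key)
  with winner_least[OF \<open>vs \<noteq> []\<close>, where c = c and a = "seats c vs k'"] k' assms(2)
  show False by (simp add: S_seq_def)
qed

lemma prio_ge_iff_seats:
  assumes pos: "\<forall>v \<in> set vs. 0 < v" and "0 \<le> c" and ij: "i < j" "j < length vs"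
  shows "prio_ge c (vs ! i) a (vs ! j) b \<longleftrightarrow> (\<exists>k. a < seats c vs k i \<and> seats c vs k j \<le> b)"
proof
  assume "\<exists>k. a < seats c vs k i \<and> seats c vs k j \<le> b"
  moreover have "0 \<le> vs ! j" using pos ij(2) by (simp add: less_imp_le)
  ultimately show "prio_ge c (vs ! i) a (vs ! j) b"
    using prio_ge_if_seats[OF \<open>0 \<le> c\<close> ij(2)] by blast
next
  assume prio: "prio_ge c (vs ! i) a (vs ! j) b"
  show "\<exists>k. a < seats c vs k i \<and> seats c vs k j \<le> b"
  proof (rule ccontr)
    assume none: "\<not> ?thesis"
    obtain k where "a < seats c vs k i" using seats_unbounded[OF pos \<open>0 \<le> c\<close>] ij by fastforce
    with none have "b < seats c vs k j" by (simp add: not_le)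
    then obtain k' where k': "seats c vs k' j = b" "S_seq c vs k' = j"
      using seat_awarded_at_count by blast
    with none have "seats c vs k' i \<le> a" by (auto simp: not_less)
    with k' ij have "b < seats c vs (Suc k') j" "seats c vs (Suc k') i \<le> a"
      by (auto simp: S_seq_def Let_def)
    moreover have "0 \<le> vs ! i" using pos ij by (simp add: less_imp_le)
    ultimately show False using not_prio_ge_if_seats[OF \<open>0 \<le> c\<close> ij] prio by blast
  qed
qed

lemma S_seq_eq_iff_prio_ge_eq:
  assumes pos: "\<forall>v \<in> set vs. 0 < v" and "0 \<le> c" "0 \<le> c'"
  shows "S_seq c vs = S_seq c' vs \<longleftrightarrow> (\<forall>i j a b. i < j \<longrightarrow> j < length vs \<longrightarrow>
           (prio_ge c (vs ! i) a (vs ! j) b \<longleftrightarrow> prio_ge c' (vs ! i) a (vs ! j) b))"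
    (is "_ \<longleftrightarrow> ?same_prio")
proof
  assume S: "S_seq c vs = S_seq c' vs"
  show ?same_prio
  proof (intro allI impI)
    fix i j a b
    assume "i < j" "j < length vs"
    then show "prio_ge c (vs ! i) a (vs ! j) b \<longleftrightarrow> prio_ge c' (vs ! i) a (vs ! j) b"
      using prio_ge_iff_seats[OF pos \<open>0 \<le> c\<close>] prio_ge_iff_seats[OF pos \<open>0 \<le> c'\<close>]
        seats_eq_if_S_seq_eq[OF S] by simp
  qed
qed (rule S_seq_cong, blast)

text \<open>Parties with equal votes are compared by seat count alone, whatever c is.\<close>
lemma S_seq_eq_iff_prio_ge_eq_on_values:
  assumes "sorted_wrt (\<ge>) vs" and pos: "\<forall>v \<in> set vs. 0 < v" and "0 \<le> c" "0 \<le> c'"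
  shows "S_seq c vs = S_seq c' vs \<longleftrightarrow> (\<forall>x \<in> set vs. \<forall>y \<in> set vs. y < x \<longrightarrow>
           (\<forall>a b. prio_ge c x a y b \<longleftrightarrow> prio_ge c' x a y b))"
  unfolding S_seq_eq_iff_prio_ge_eq[OF pos \<open>0 \<le> c\<close> \<open>0 \<le> c'\<close>]
proof (rule iffI; intro ballI impI allI)
  fix x y a b
  assume by_index: "\<forall>i j a b. i < j \<longrightarrow> j < length vs \<longrightarrow>
      (prio_ge c (vs ! i) a (vs ! j) b \<longleftrightarrow> prio_ge c' (vs ! i) a (vs ! j) b)"
    and "x \<in> set vs" "y \<in> set vs" "y < x"
  then obtain i j where ij: "i < length vs" "j < length vs" "x = vs ! i" "y = vs ! j"
    by (metis in_set_conv_nth)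
  have "i < j"
  proof (rule ccontr)
    assume "\<not> i < j"
    with ij assms(1) have "vs ! i \<le> vs ! j"
      by (cases "i = j") (auto simp: sorted_wrt_iff_nth_less)
    with ij \<open>y < x\<close> show False by simp
  qed
  with by_index ij show "prio_ge c x a y b \<longleftrightarrow> prio_ge c' x a y b" by blast
next
  fix i j a b
  assume by_value: "\<forall>x \<in> set vs. \<forall>y \<in> set vs. y < x \<longrightarrow>
      (\<forall>a b. prio_ge c x a y b \<longleftrightarrow> prio_ge c' x a y b)"
    and "i < j" "j < length vs"
  then have "vs ! j \<le> vs ! i" "vs ! i \<in> set vs" "vs ! j \<in> set vs"
    using assms(1) by (auto simp: sorted_wrt_iff_nth_less)
  show "prio_ge c (vs ! i) a (vs ! j) b \<longleftrightarrow> prio_ge c' (vs ! i) a (vs ! j) b"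
  proof (cases "vs ! j = vs ! i")
    case True
    with pos \<open>vs ! i \<in> set vs\<close> \<open>0 \<le> c\<close> \<open>0 \<le> c'\<close> show ?thesis
      by (simp add: prio_ge_equal_votes)
  next
    case False
    with by_value \<open>vs ! j \<le> vs ! i\<close> \<open>vs ! i \<in> set vs\<close> \<open>vs ! j \<in> set vs\<close> show ?thesis
      by simp
  qed
qed

lemma eqpoll_image_if_same_kernel:
  assumes kernel: "\<And>x y. x \<in> A \<Longrightarrow> y \<in> A \<Longrightarrow> f x = f y \<longleftrightarrow> g x = g y"
  shows "f ` A \<approx> g ` A"
proof -
  have g_inv_f: "g (inv_into A f (f x)) = g x" and f_inv_g: "f (inv_into A g (g x)) = f x"
    if "x \<in> A" for x
    using that kernel[of "inv_into A f (f x)" x] kernel[of "inv_into A g (g x)" x]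
    by (auto simp: inv_into_into f_inv_into_f)
  show ?thesis
    unfolding eqpoll_iff_bijections
    by (rule exI[of _ "g \<circ> inv_into A f"], rule exI[of _ "f \<circ> inv_into A g"])
      (auto simp: g_inv_f f_inv_g)
qed

theorem mainTheorem19:
  fixes p q :: "nat list"
  assumes "sorted_wrt (\<ge>) p"
    and "\<forall>x \<in> set p. x > 0"
    and "sorted_wrt (>) q"
    and "set q = set p"
  shows "{S_seq c (map real p) | c. 0 \<le> c \<and> c \<le> 1}
           \<approx> {S_seq c (map real q) | c. 0 \<le> c \<and> c \<le> 1}"
proof -
  have "sorted_wrt (\<ge>) q"
    using assms(3) by (rule sorted_wrt_mono_rel[rotated]) simp
  with assms(1) have sorted: "sorted_wrt (\<ge>) (map real p)" "sorted_wrt (\<ge>) (map real q)"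
    by (simp_all add: sorted_wrt_map)
  have pos: "\<forall>v \<in> set (map real p). 0 < v" "\<forall>v \<in> set (map real q). 0 < v"
    using assms(2,4) by auto
  have kernel: "S_seq c (map real p) = S_seq c' (map real p) \<longleftrightarrow>
        S_seq c (map real q) = S_seq c' (map real q)" if "0 \<le> c" "0 \<le> c'" for c c'
    unfolding S_seq_eq_iff_prio_ge_eq_on_values[OF sorted(1) pos(1) that]
      S_seq_eq_iff_prio_ge_eq_on_values[OF sorted(2) pos(2) that]
    using assms(4) by simp
  have "(\<lambda>c. S_seq c (map real p)) ` {0..1} \<approx> (\<lambda>c. S_seq c (map real q)) ` {0..1}"
    by (rule eqpoll_image_if_same_kernel, rule kernel) auto
  moreover have "{S_seq c vs | c. 0 \<le> c \<and> c \<le> 1} = (\<lambda>c. S_seq c vs) ` {0..1}" for vs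
    by (auto simp: Setcompr_eq_image)
  ultimately show ?thesis by simp
qed

end
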